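(* Let $n\geq 5$, let $S$ be the set of all $3$-cycles in $S_n$, let $CAG_n=\mathrm{Cay}(A_n,S)$, and let $G_e$ be the stabilizer of the identity vertex $e$ in $\mathrm{Aut}(CAG_n)$. For $1\leq i<j<k\leq n$ put $\Delta_{i,j,k}=\{(i,j,k),(i,k,j)\}$ and $\Delta=\{\Delta_{i,j,k}\mid 1\leq i<j<k\leq n\}$. Each $g\in G_e$ permutes the members of $\Delta$, giving an action of $G_e$ on $\Delta$; let $K$ be the kernel of this action. Then $|K|\leq 2$.
   Context: For a finite group $\Gamma$ and a subset $T\subseteq\Gamma$ with $e\notin T$ and $T=T^{-1}$, the Cayley graph $\mathrm{Cay}(\Gamma,T)$ is the undirected graph with vertex set $\Gamma$ and edge set $\{\{\gamma,t\gamma\}\mid \gamma\in\Gamma, t\in T\}$. Elements of $G_e$ map $S$ (the neighbourhood of $e$) to itself. *)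

theory Defs
  imports "HOL-Combinatorics.Permutations" "HOL-Library.FuncSet"
begin

text \<open>Permutations of {1..n} are functions nat => nat that permute {1..n};
  the product t*g of permutations is the composition t o g.\<close>

definition alt_grp :: "nat \<Rightarrow> (nat \<Rightarrow> nat) set" where
  "alt_grp n = {p. p permutes {1..n} \<and> evenperm p}"

definition cyc3 :: "nat \<Rightarrow> nat \<Rightarrow> nat \<Rightarrow> nat \<Rightarrow> nat" where
  "cyc3 i j k = (\<lambda>x. if x = i then j else if x = j then k else if x = k then i else x)"

definition three_cycles :: "nat \<Rightarrow> (nat \<Rightarrow> nat) set" where
  "three_cycles n = {cyc3 i j k | i j k. i \<in> {1..n} \<and> j \<in> {1..n} \<and> k \<in> {1..n}
      \<and> i \<noteq> j \<and> j \<noteq> k \<and> i \<noteq> k}"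

definition cag_adj :: "nat \<Rightarrow> (nat \<Rightarrow> nat) \<Rightarrow> (nat \<Rightarrow> nat) \<Rightarrow> bool" where
  "cag_adj n x y = (\<exists>t\<in>three_cycles n. y = t \<circ> x \<or> x = t \<circ> y)"

definition cag_aut :: "nat \<Rightarrow> ((nat \<Rightarrow> nat) \<Rightarrow> (nat \<Rightarrow> nat)) set" where
  "cag_aut n = {\<phi> \<in> alt_grp n \<rightarrow>\<^sub>E alt_grp n. bij_betw \<phi> (alt_grp n) (alt_grp n) \<and>
      (\<forall>x\<in>alt_grp n. \<forall>y\<in>alt_grp n. cag_adj n x y \<longleftrightarrow> cag_adj n (\<phi> x) (\<phi> y))}"

definition stab_e :: "nat \<Rightarrow> ((nat \<Rightarrow> nat) \<Rightarrow> (nat \<Rightarrow> nat)) set" where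
  "stab_e n = {\<phi> \<in> cag_aut n. \<phi> id = id}"

definition Delta_ijk :: "nat \<Rightarrow> nat \<Rightarrow> nat \<Rightarrow> (nat \<Rightarrow> nat) set" where
  "Delta_ijk i j k = {cyc3 i j k, cyc3 i k j}"

definition Delta :: "nat \<Rightarrow> (nat \<Rightarrow> nat) set set" where
  "Delta n = {Delta_ijk i j k | i j k. 1 \<le> i \<and> i < j \<and> j < k \<and> k \<le> n}"

definition delta_kernel :: "nat \<Rightarrow> ((nat \<Rightarrow> nat) \<Rightarrow> (nat \<Rightarrow> nat)) set" where
  "delta_kernel n = {g \<in> stab_e n. \<forall>D\<in>Delta n. g ` D = D}"

end

theory Submission
  imports Defs
begin

text \<open>An element of \<open>K\<close> fixes \<open>id\<close> and sends each 3-cycle \<open>t\<close> to \<open>t\<close> or \<open>t\<inverse>\<close>.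
  As \<open>(a b c)\<close> is adjacent to \<open>(a b d)\<close> but not to \<open>(a d b)\<close>, the choice is the same for
  all 3-cycles; composing with inversion, itself an automorphism because \<open>S\<close> is closed under
  conjugation, it remains to show that an automorphism fixing \<open>id\<close> and all its neighbours is
  the identity. A product of two 3-cycles has three fixed neighbours whose only other common
  neighbours are \<open>id\<close> and 3-cycles; up to conjugation there are three such products, each
  checked by a computation on five or six points. Right translation then spreads the fixed
  neighbourhood along words in 3-cycles, which generate \<open>A\<^sub>n\<close>. So \<open>K\<close> consists at most
  of the identity and the inversion map.\<close>

section \<open>Three-cycles and the points they move\<close>

definition is_3cycle :: "(nat \<Rightarrow> nat) \<Rightarrow> bool" where
  "is_3cycle p \<longleftrightarrow> (\<exists>i j k. i \<noteq> j \<and> j \<noteq> k \<and> i \<noteq> k \<and> p = cyc3 i j k)"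

definition moved :: "(nat \<Rightarrow> nat) \<Rightarrow> nat set" where
  "moved p = {x. p x \<noteq> x}"

text \<open>Computes \<open>card (moved p)\<close> by evaluation when \<open>p\<close> moves only points of \<open>L\<close>.\<close>
definition count_moved :: "nat list \<Rightarrow> (nat \<Rightarrow> nat) \<Rightarrow> nat" where
  "count_moved L p = length (filter (\<lambda>x. p x \<noteq> x) L)"

lemma bij_inv_cancel:
  assumes "bij x"
  shows "x \<circ> inv x = id" "inv x \<circ> x = id" "x \<circ> (inv x \<circ> f) = f" "inv x \<circ> (x \<circ> f) = f"
proof -
  show xi: "x \<circ> inv x = id" using assms bij_is_surj surj_iff by blast
  show ix: "inv x \<circ> x = id" using assms bij_is_inj inv_o_cancel by blast
  show "x \<circ> (inv x \<circ> f) = f" "inv x \<circ> (x \<circ> f) = f" by (simp_all add: xi ix flip: comp_assoc)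
qed

lemma bij_comp_right_cancel:
  fixes x :: "'a \<Rightarrow> 'a"
  assumes "bij x" "f \<circ> x = g \<circ> x"
  shows "f = g"
proof -
  have "f \<circ> (x \<circ> inv x) = g \<circ> (x \<circ> inv x)" using assms(2) by (simp flip: comp_assoc)
  then show ?thesis by (simp add: bij_inv_cancel[OF assms(1)])
qed

lemma conj_comp:
  fixes s :: "'a \<Rightarrow> 'a"
  shows "bij s \<Longrightarrow> s \<circ> (x \<circ> y) \<circ> inv s = (s \<circ> x \<circ> inv s) \<circ> (s \<circ> y \<circ> inv s)"
  by (simp add: comp_assoc bij_inv_cancel)

lemma conj_inv_cancel:
  fixes s :: "'a \<Rightarrow> 'a"
  assumes "bij s"
  shows "inv s \<circ> (s \<circ> y \<circ> inv s) \<circ> inv (inv s) = y" "s \<circ> (inv s \<circ> y \<circ> inv (inv s)) \<circ> inv s = y"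
  by (simp_all add: comp_assoc inv_inv_eq[OF assms] bij_inv_cancel[OF assms])

lemma is_3cycle_cyc3: "i \<noteq> j \<Longrightarrow> j \<noteq> k \<Longrightarrow> i \<noteq> k \<Longrightarrow> is_3cycle (cyc3 i j k)"
  unfolding is_3cycle_def by blast

lemma cyc3_rotate: "i \<noteq> j \<Longrightarrow> j \<noteq> k \<Longrightarrow> i \<noteq> k \<Longrightarrow> cyc3 i j k = cyc3 j k i"
  by (auto simp: cyc3_def fun_eq_iff)

lemma cyc3_eq_transpose_comp:
  "i \<noteq> j \<Longrightarrow> j \<noteq> k \<Longrightarrow> i \<noteq> k \<Longrightarrow> cyc3 i j k = transpose i j \<circ> transpose j k"
  by (auto simp: cyc3_def fun_eq_iff transpose_def)

lemma cyc3_permutes: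
  "i \<in> X \<Longrightarrow> j \<in> X \<Longrightarrow> k \<in> X \<Longrightarrow> i \<noteq> j \<Longrightarrow> j \<noteq> k \<Longrightarrow> i \<noteq> k \<Longrightarrow> cyc3 i j k permutes X"
  by (simp add: cyc3_eq_transpose_comp permutes_compose permutes_swap_id)

lemma evenperm_cyc3: "i \<noteq> j \<Longrightarrow> j \<noteq> k \<Longrightarrow> i \<noteq> k \<Longrightarrow> evenperm (cyc3 i j k)"
  by (simp add: cyc3_eq_transpose_comp evenperm_comp permutation_swap_id evenperm_swap)

lemma bij_cyc3: "i \<noteq> j \<Longrightarrow> j \<noteq> k \<Longrightarrow> i \<noteq> k \<Longrightarrow> bij (cyc3 i j k)"
  by (simp add: cyc3_eq_transpose_comp bij_comp)

lemma inv_cyc3: "i \<noteq> j \<Longrightarrow> j \<noteq> k \<Longrightarrow> i \<noteq> k \<Longrightarrow> inv (cyc3 i j k) = cyc3 i k j"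
  by (rule inv_unique_comp) (auto simp: fun_eq_iff cyc3_def)

lemma cyc3_neq_inverse: "i \<noteq> j \<Longrightarrow> j \<noteq> k \<Longrightarrow> i \<noteq> k \<Longrightarrow> cyc3 i j k \<noteq> cyc3 i k j"
  by (metis cyc3_def)

lemma conj_cyc3:
  assumes "bij s"
  shows "s \<circ> cyc3 i j k \<circ> inv s = cyc3 (s i) (s j) (s k)"
proof
  fix x
  obtain u where u: "x = s u" using assms by (metis bij_pointE)
  have "s a = s c \<longleftrightarrow> a = c" for a c using assms by (auto dest: bij_is_inj simp: inj_eq)
  then show "(s \<circ> cyc3 i j k \<circ> inv s) x = cyc3 (s i) (s j) (s k) x"
    by (simp add: u cyc3_def inv_f_f[OF bij_is_inj[OF assms]])
qed

lemma bij_3cycle: "is_3cycle p \<Longrightarrow> bij p"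
  unfolding is_3cycle_def using bij_cyc3 by auto

lemma is_3cycle_inv: "is_3cycle p \<Longrightarrow> is_3cycle (inv p)"
  unfolding is_3cycle_def by (metis inv_cyc3)

lemma is_3cycle_conj: "bij s \<Longrightarrow> is_3cycle p \<Longrightarrow> is_3cycle (s \<circ> p \<circ> inv s)"
  unfolding is_3cycle_def by (metis conj_cyc3 bij_is_inj inj_eq)

lemma is_3cycle_no_transposition: "is_3cycle p \<Longrightarrow> p x = y \<Longrightarrow> p y = x \<Longrightarrow> x = y"
  unfolding is_3cycle_def cyc3_def by (auto split: if_splits)

lemma moved_cyc3: "i \<noteq> j \<Longrightarrow> j \<noteq> k \<Longrightarrow> i \<noteq> k \<Longrightarrow> moved (cyc3 i j k) = {i, j, k}"
  by (auto simp: moved_def cyc3_def)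

lemma moved_comp: "moved (p \<circ> q) \<subseteq> moved p \<union> moved q"
  by (auto simp: moved_def)

lemma cyc3_starting_at:
  assumes "is_3cycle p" "x \<in> moved p"
  obtains j k where "x \<noteq> j" "j \<noteq> k" "x \<noteq> k" "p = cyc3 x j k"
proof -
  obtain a b c where d: "a \<noteq> b" "b \<noteq> c" "a \<noteq> c" and p: "p = cyc3 a b c"
    using assms(1) unfolding is_3cycle_def by blast
  have "x = a \<or> x = b \<or> x = c" using assms(2) moved_cyc3[OF d] p by auto
  then show thesis using that d p cyc3_rotate by metis
qed

lemma bij_moved_closed: "bij p \<Longrightarrow> v \<in> moved p \<Longrightarrow> p v \<in> moved p"
  unfolding moved_def by (auto dest: bij_is_inj simp: inj_eq)

lemma card_moved_3cycle: "is_3cycle p \<Longrightarrow> card (moved p) = 3"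
  unfolding is_3cycle_def by (auto simp: moved_cyc3)

lemma is_3cycle_iff_card_moved:
  assumes "bij p"
  shows "is_3cycle p \<longleftrightarrow> card (moved p) = 3"
proof
  show "is_3cycle p \<Longrightarrow> card (moved p) = 3" by (rule card_moved_3cycle)
next
  assume "card (moved p) = 3"
  then obtain x y z where M: "moved p = {x, y, z}" and d: "x \<noteq> y" "y \<noteq> z" "x \<noteq> z"
    by (auto simp: card_3_iff)
  have inj: "p u = p v \<Longrightarrow> u = v" for u v using assms by (auto dest: bij_is_inj simp: inj_eq)
  have fixed: "v \<notin> {x, y, z} \<Longrightarrow> p v = v" for v using M unfolding moved_def by blast
  have px: "p x \<in> {y, z}" and py: "p y \<in> {x, z}" and pz: "p z \<in> {x, y}"
    using bij_moved_closed[OF assms] M unfolding moved_def by (auto simp: M)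
  have "p = cyc3 x y z \<or> p = cyc3 x z y"
  proof (cases "p x = y")
    case True
    then have "p y = z" "p z = x" using py pz inj d by (metis insert_iff singletonD)+
    then show ?thesis using True fixed by (auto simp: fun_eq_iff cyc3_def)
  next
    case False
    then have "p x = z" "p z = y" "p y = x" using px py pz inj d by (metis insert_iff singletonD)+
    then show ?thesis using fixed by (auto simp: fun_eq_iff cyc3_def)
  qed
  then show "is_3cycle p" using d is_3cycle_cyc3 by auto
qed

lemma is_3cycle_iff_count_moved:
  assumes "bij p" "moved p \<subseteq> set L" "distinct L"
  shows "is_3cycle p \<longleftrightarrow> count_moved L p = 3"
proof -
  have "set (filter (\<lambda>x. p x \<noteq> x) L) = moved p" using assms(2) by (auto simp: moved_def)
  then have "count_moved L p = card (moved p)"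
    unfolding count_moved_def using assms(3) by (metis distinct_card distinct_filter)
  then show ?thesis using is_3cycle_iff_card_moved[OF assms(1)] by simp
qed

section \<open>The Cayley graph of \<open>A\<^sub>n\<close> and its automorphisms\<close>

lemma alt_grp_permutes: "x \<in> alt_grp n \<Longrightarrow> x permutes {1..n}"
  by (simp add: alt_grp_def)

lemma id_in_alt_grp: "id \<in> alt_grp n"
  by (simp add: alt_grp_def permutes_id)

lemma alt_grp_permutation: "x \<in> alt_grp n \<Longrightarrow> permutation x"
  unfolding alt_grp_def permutation_permutes by blast

lemma alt_grp_comp: "x \<in> alt_grp n \<Longrightarrow> y \<in> alt_grp n \<Longrightarrow> x \<circ> y \<in> alt_grp n"
  using evenperm_comp[OF alt_grp_permutation alt_grp_permutation] permutes_compose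
  unfolding alt_grp_def by auto

lemma alt_grp_inv: "x \<in> alt_grp n \<Longrightarrow> inv x \<in> alt_grp n"
  using evenperm_inv[OF alt_grp_permutation] permutes_inv unfolding alt_grp_def by auto

lemma alt_grp_bij: "x \<in> alt_grp n \<Longrightarrow> bij x"
  using alt_grp_permutes permutes_bij by blast

lemma alt_grp_inv_inv: "x \<in> alt_grp n \<Longrightarrow> inv (inv x) = x"
  using alt_grp_bij inv_inv_eq by blast

lemma alt_grp_conj:
  assumes s: "s permutes {1..n}" and x: "x \<in> alt_grp n"
  shows "s \<circ> x \<circ> inv s \<in> alt_grp n"
proof -
  have ps: "permutation s" "permutation (inv s)"
    using s permutes_inv finite_atLeastAtMost permutation_permutes by blast+
  have px: "permutation x" using alt_grp_permutation[OF x] .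
  have "evenperm (s \<circ> x \<circ> inv s) = evenperm x"
    using ps px by (cases "evenperm s") (simp_all add: evenperm_comp evenperm_inv permutation_compose)
  moreover have "s \<circ> x \<circ> inv s permutes {1..n}"
    using s alt_grp_permutes[OF x] permutes_compose permutes_inv by blast
  ultimately show ?thesis using x unfolding alt_grp_def by simp
qed

lemma cyc3_in_alt_grp:
  "i \<in> {1..n} \<Longrightarrow> j \<in> {1..n} \<Longrightarrow> k \<in> {1..n} \<Longrightarrow> i \<noteq> j \<Longrightarrow> j \<noteq> k \<Longrightarrow> i \<noteq> k
    \<Longrightarrow> cyc3 i j k \<in> alt_grp n"
  unfolding alt_grp_def using cyc3_permutes evenperm_cyc3 by auto

lemma cyc3_in_three_cycles:
  "i \<in> {1..n} \<Longrightarrow> j \<in> {1..n} \<Longrightarrow> k \<in> {1..n} \<Longrightarrow> i \<noteq> j \<Longrightarrow> j \<noteq> k \<Longrightarrow> i \<noteq> k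
    \<Longrightarrow> cyc3 i j k \<in> three_cycles n"
  unfolding three_cycles_def by blast

lemma three_cycles_iff: "t \<in> three_cycles n \<longleftrightarrow> is_3cycle t \<and> t \<in> alt_grp n"
proof
  assume "t \<in> three_cycles n"
  then show "is_3cycle t \<and> t \<in> alt_grp n"
    unfolding three_cycles_def using cyc3_in_alt_grp is_3cycle_cyc3 by auto
next
  assume t: "is_3cycle t \<and> t \<in> alt_grp n"
  then obtain i j k where d: "i \<noteq> j" "j \<noteq> k" "i \<noteq> k" and tijk: "t = cyc3 i j k"
    unfolding is_3cycle_def by blast
  have "i \<in> moved t" "j \<in> moved t" "k \<in> moved t"
    using moved_cyc3[OF d] tijk by auto
  then have "i \<in> {1..n}" "j \<in> {1..n}" "k \<in> {1..n}"
    using permutes_not_in[OF alt_grp_permutes] t unfolding moved_def by blast+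
  then show "t \<in> three_cycles n" using d tijk cyc3_in_three_cycles by blast
qed

definition cay3_adj :: "(nat \<Rightarrow> nat) \<Rightarrow> (nat \<Rightarrow> nat) \<Rightarrow> bool" where
  "cay3_adj x y \<longleftrightarrow> (\<exists>t. is_3cycle t \<and> y = t \<circ> x)"

text \<open>Only injectivity on \<open>A\<^sub>n\<close> is required, so that composites with translations,
  conjugations and inversion are automorphisms without further bookkeeping.\<close>
definition cay3_aut :: "nat \<Rightarrow> ((nat \<Rightarrow> nat) \<Rightarrow> (nat \<Rightarrow> nat)) \<Rightarrow> bool" where
  "cay3_aut n h \<longleftrightarrow> (\<forall>x\<in>alt_grp n. h x \<in> alt_grp n) \<and> inj_on h (alt_grp n) \<and>
     (\<forall>x\<in>alt_grp n. \<forall>y\<in>alt_grp n. cay3_adj x y \<longleftrightarrow> cay3_adj (h x) (h y))"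

definition fixes_closed_nbhd :: "nat \<Rightarrow> ((nat \<Rightarrow> nat) \<Rightarrow> (nat \<Rightarrow> nat)) \<Rightarrow> bool" where
  "fixes_closed_nbhd n h \<longleftrightarrow> h id = id \<and> (\<forall>t\<in>three_cycles n. h t = t)"

lemma cay3_adj_sym: "cay3_adj x y \<Longrightarrow> cay3_adj y x"
  unfolding cay3_adj_def
  by (auto simp: bij_inv_cancel bij_3cycle comp_assoc[symmetric] intro: is_3cycle_inv)

lemma cay3_adj_right_comp: "bij x \<Longrightarrow> cay3_adj (u \<circ> x) (v \<circ> x) \<longleftrightarrow> cay3_adj u v"
  unfolding cay3_adj_def by (auto simp: comp_assoc[symmetric] dest: bij_comp_right_cancel)

lemma cay3_adj_conj:
  assumes s: "bij s" and adj: "cay3_adj x y"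
  shows "cay3_adj (s \<circ> x \<circ> inv s) (s \<circ> y \<circ> inv s)"
proof -
  obtain t where t: "is_3cycle t" "y = t \<circ> x" using adj unfolding cay3_adj_def by blast
  have "s \<circ> y \<circ> inv s = (s \<circ> t \<circ> inv s) \<circ> (s \<circ> x \<circ> inv s)"
    by (simp add: t(2) comp_assoc bij_inv_cancel[OF s])
  then show ?thesis using is_3cycle_conj[OF s t(1)] unfolding cay3_adj_def by blast
qed

lemma cay3_adj_inv:
  assumes x: "bij x" and adj: "cay3_adj x y"
  shows "cay3_adj (inv x) (inv y)"
proof -
  obtain t where t: "is_3cycle t" "y = t \<circ> x" using adj unfolding cay3_adj_def by blast
  have "inv y = inv x \<circ> inv t" using t o_inv_distrib[OF bij_3cycle[OF t(1)] x] by simp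
  also have "\<dots> = (inv x \<circ> inv t \<circ> inv (inv x)) \<circ> inv x"
    by (simp add: comp_assoc inv_inv_eq[OF x] bij_inv_cancel[OF x])
  finally show ?thesis
    using is_3cycle_conj[OF bij_imp_bij_inv[OF x] is_3cycle_inv[OF t(1)]]
    unfolding cay3_adj_def by blast
qed

lemma cag_adj_iff_cay3_adj:
  assumes "x \<in> alt_grp n" "y \<in> alt_grp n"
  shows "cag_adj n x y \<longleftrightarrow> cay3_adj x y"
proof
  assume "cag_adj n x y"
  then obtain t where t: "t \<in> three_cycles n" "y = t \<circ> x \<or> x = t \<circ> y"
    unfolding cag_adj_def by blast
  then show "cay3_adj x y" using cay3_adj_sym three_cycles_iff unfolding cay3_adj_def by blast
next
  assume "cay3_adj x y"
  then obtain t where t: "is_3cycle t" "y = t \<circ> x" unfolding cay3_adj_def by blast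
  have "t = y \<circ> inv x"
    using t(2) by (simp add: comp_assoc bij_inv_cancel[OF alt_grp_bij[OF assms(1)]])
  then have "t \<in> three_cycles n"
    using t(1) alt_grp_comp[OF assms(2) alt_grp_inv[OF assms(1)]] three_cycles_iff by simp
  then show "cag_adj n x y" using t(2) unfolding cag_adj_def by blast
qed

lemma cag_aut_imp_cay3_aut: "g \<in> cag_aut n \<Longrightarrow> cay3_aut n g"
  unfolding cag_aut_def cay3_aut_def
  by (auto simp: PiE_def Pi_def cag_adj_iff_cay3_adj bij_betw_imp_inj_on)

lemma cay3_aut_adj:
  "cay3_aut n h \<Longrightarrow> x \<in> alt_grp n \<Longrightarrow> y \<in> alt_grp n \<Longrightarrow> cay3_adj x y \<Longrightarrow> cay3_adj (h x) (h y)"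
  unfolding cay3_aut_def by blast

lemma cay3_aut_comp:
  assumes f: "cay3_aut n f" and g: "cay3_aut n g"
  shows "cay3_aut n (f \<circ> g)"
proof -
  have gA: "\<forall>x\<in>alt_grp n. g x \<in> alt_grp n" using g unfolding cay3_aut_def by blast
  have inj: "inj_on (f \<circ> g) (alt_grp n)"
    using f g gA unfolding cay3_aut_def by (metis comp_inj_on image_subset_iff inj_on_subset)
  have "cay3_adj x y \<longleftrightarrow> cay3_adj (f (g x)) (f (g y))"
    if "x \<in> alt_grp n" "y \<in> alt_grp n" for x y
  proof -
    have "cay3_adj x y \<longleftrightarrow> cay3_adj (g x) (g y)" using g that unfolding cay3_aut_def by blast
    also have "\<dots> \<longleftrightarrow> cay3_adj (f (g x)) (f (g y))" using f gA that unfolding cay3_aut_def by blast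
    finally show ?thesis .
  qed
  with inj gA f show ?thesis unfolding cay3_aut_def comp_def by blast
qed

lemma cay3_aut_right_mult:
  assumes x: "x \<in> alt_grp n"
  shows "cay3_aut n (\<lambda>y. y \<circ> x)"
proof -
  have "inj (\<lambda>y. y \<circ> x)" by (rule injI) (rule bij_comp_right_cancel[OF alt_grp_bij[OF x]])
  then show ?thesis
    using alt_grp_comp[OF _ x] cay3_adj_right_comp[OF alt_grp_bij[OF x]] inj_on_subset[of _ UNIV]
    unfolding cay3_aut_def by blast
qed

lemma cay3_aut_conj:
  assumes s: "s permutes {1..n}"
  shows "cay3_aut n (\<lambda>y. s \<circ> y \<circ> inv s)"
proof -
  have b: "bij s" "bij (inv s)" using s permutes_bij permutes_inv by blast+
  note undo = conj_inv_cancel(1)[OF b(1)]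
  have "inj (\<lambda>y. s \<circ> y \<circ> inv s)"
  proof (rule injI)
    fix x y assume "s \<circ> x \<circ> inv s = s \<circ> y \<circ> inv s"
    then have "inv s \<circ> (s \<circ> x \<circ> inv s) \<circ> inv (inv s) = inv s \<circ> (s \<circ> y \<circ> inv s) \<circ> inv (inv s)"
      by simp
    then show "x = y" by (simp only: undo)
  qed
  moreover have "cay3_adj x y" if "cay3_adj (s \<circ> x \<circ> inv s) (s \<circ> y \<circ> inv s)" for x y
    using cay3_adj_conj[OF b(2) that] by (simp only: undo)
  ultimately show ?thesis
    using alt_grp_conj[OF s] cay3_adj_conj[OF b(1)] inj_on_subset[of _ UNIV]
    unfolding cay3_aut_def by blast
qed

lemma cay3_aut_inv: "cay3_aut n inv"
proof -
  note ii = alt_grp_inv_inv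
  have "inj_on inv (alt_grp n)"
  proof (rule inj_onI)
    fix x y assume "x \<in> alt_grp n" "y \<in> alt_grp n" "inv x = inv y"
    then show "x = y" using ii by metis
  qed
  moreover have "cay3_adj x y \<longleftrightarrow> cay3_adj (inv x) (inv y)"
    if x: "x \<in> alt_grp n" and y: "y \<in> alt_grp n" for x y
  proof
    show "cay3_adj x y \<Longrightarrow> cay3_adj (inv x) (inv y)" using cay3_adj_inv[OF alt_grp_bij[OF x]] .
    assume "cay3_adj (inv x) (inv y)"
    from cay3_adj_inv[OF alt_grp_bij[OF alt_grp_inv[OF x]] this] show "cay3_adj x y"
      by (simp only: ii[OF x] ii[OF y])
  qed
  ultimately show ?thesis using alt_grp_inv unfolding cay3_aut_def by blast
qed

lemma cay3_adj_by_cyc3: "i \<noteq> j \<Longrightarrow> j \<noteq> k \<Longrightarrow> i \<noteq> k \<Longrightarrow> y = cyc3 i j k \<circ> x \<Longrightarrow> cay3_adj x y"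
  unfolding cay3_adj_def using is_3cycle_cyc3 by blast

lemma cay3_adj_right_inverse: "cay3_adj c y \<Longrightarrow> c \<circ> c' = id \<Longrightarrow> is_3cycle (y \<circ> c')"
  unfolding cay3_adj_def by (auto simp: comp_assoc)

section \<open>Rigidity at distance two\<close>

lemma fixes_closed_nbhd_cyc3:
  "fixes_closed_nbhd n h \<Longrightarrow> i \<in> {1..n} \<Longrightarrow> j \<in> {1..n} \<Longrightarrow> k \<in> {1..n} \<Longrightarrow>
    i \<noteq> j \<Longrightarrow> j \<noteq> k \<Longrightarrow> i \<noteq> k \<Longrightarrow> h (cyc3 i j k) = cyc3 i j k"
  unfolding fixes_closed_nbhd_def using cyc3_in_three_cycles by blast

lemma fixed_if_common_neighbours_fixed:
  assumes h: "cay3_aut n h" "fixes_closed_nbhd n h" and z: "z \<in> alt_grp n"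
    and V: "\<And>v. v \<in> V \<Longrightarrow> v \<in> alt_grp n \<and> h v = v \<and> cay3_adj v z"
    and common: "\<And>y. y \<in> alt_grp n \<Longrightarrow> \<forall>v\<in>V. cay3_adj v y \<Longrightarrow> y = z \<or> y = id \<or> is_3cycle y"
  shows "h z = z"
proof -
  have hz: "h z \<in> alt_grp n" and inj: "inj_on h (alt_grp n)"
    using h(1) z unfolding cay3_aut_def by blast+
  have "\<forall>v\<in>V. cay3_adj v (h z)" using cay3_aut_adj[OF h(1) _ z] V by metis
  then consider "h z = z" | "h z = id" | "is_3cycle (h z)" using common[OF hz] by blast
  then show ?thesis
  proof cases
    case 2
    then have "h z = h id" using h(2) unfolding fixes_closed_nbhd_def by simp
    then show ?thesis using inj_onD[OF inj _ z id_in_alt_grp] 2 by simp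
  next
    case 3
    then have "h (h z) = h z" using h(2) hz three_cycles_iff unfolding fixes_closed_nbhd_def by blast
    then show ?thesis using inj_onD[OF inj _ hz z] by simp
  qed
qed

lemma moved_subset_if_comp_3cycle:
  assumes w: "is_3cycle w" and wk: "is_3cycle (w \<circ> k)" and k: "5 \<le> card (moved k)"
  shows "moved w \<subseteq> moved k"
proof (rule ccontr)
  assume "\<not> moved w \<subseteq> moved k"
  then obtain x where x: "x \<in> moved w" "x \<notin> moved k" by blast
  have fin: "finite (moved k)" using k card.infinite by fastforce
  have cw: "card (moved w - {x}) = 2" using card_moved_3cycle[OF w] x(1) by (simp add: card_Diff_singleton)
  have "moved k \<inter> moved w \<subseteq> moved w - {x}" using x(2) by blast
  then have "card (moved k \<inter> moved w) \<le> 2"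
    using cw card_mono[of "moved w - {x}"] card.infinite by fastforce
  then have "3 \<le> card (moved k - moved w)" using k fin by (simp add: card_Diff_subset_Int)
  then have "4 \<le> card (insert x (moved k - moved w))" using fin x(2) by simp
  moreover have "insert x (moved k - moved w) \<subseteq> moved (w \<circ> k)"
    using x bij_is_inj[OF bij_3cycle[OF w]] by (auto simp: moved_def) (metis injD)
  then have "card (insert x (moved k - moved w)) \<le> 3"
    using card_moved_3cycle[OF wk] card_mono[of "moved (w \<circ> k)"] card.infinite by fastforce
  ultimately show False by simp
qed

lemma common_neighbour_in_window:
  assumes a: "cay3_adj a y" and b: "cay3_adj b y" "b \<circ> b' = id"
    and L: "5 \<le> card (moved (a \<circ> b'))" "moved (a \<circ> b') \<subseteq> set L"
  obtains q r s where "q \<in> set L" "r \<in> set L" "s \<in> set L" "q \<noteq> r" "r \<noteq> s" "q \<noteq> s"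
    "y = cyc3 q r s \<circ> a" "is_3cycle (cyc3 q r s \<circ> (a \<circ> b'))"
proof -
  obtain w where w: "is_3cycle w" "y = w \<circ> a" using a unfolding cay3_adj_def by blast
  have wb: "is_3cycle (w \<circ> (a \<circ> b'))"
    using cay3_adj_right_inverse[OF b] w(2) by (simp add: comp_assoc)
  obtain q r s where d: "q \<noteq> r" "r \<noteq> s" "q \<noteq> s" and wqrs: "w = cyc3 q r s"
    using w(1) unfolding is_3cycle_def by blast
  have "{q, r, s} \<subseteq> set L"
    using moved_subset_if_comp_3cycle[OF w(1) wb L(1)] L(2) moved_cyc3[OF d] wqrs by blast
  then show thesis using that[of q r s] d w(2) wb wqrs by simp
qed

lemma is_3cycle_cyc3_comp_iff_count_moved:
  assumes "q \<in> set L" "r \<in> set L" "s \<in> set L" "q \<noteq> r" "r \<noteq> s" "q \<noteq> s"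
    and k: "bij k" "moved k \<subseteq> set L" and L: "distinct L"
  shows "is_3cycle (cyc3 q r s \<circ> k) \<longleftrightarrow> count_moved L (cyc3 q r s \<circ> k) = 3"
proof (rule is_3cycle_iff_count_moved[OF _ _ L])
  show "bij (cyc3 q r s \<circ> k)" using assms by (simp add: bij_comp bij_cyc3)
  show "moved (cyc3 q r s \<circ> k) \<subseteq> set L"
  proof -
    have "moved (cyc3 q r s) \<subseteq> set L" using assms by (simp add: moved_cyc3)
    then show ?thesis using moved_comp[of "cyc3 q r s" k] k(2) by blast
  qed
qed

text \<open>Every common neighbour of \<open>a\<close> and \<open>b\<close> is \<open>w \<circ> a\<close> for a 3-cycle \<open>w\<close> moving only
  points of \<open>L\<close>, so the finite computation \<open>check\<close> covers all common neighbours.\<close>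
lemma fixed_by_window_check:
  assumes h: "cay3_aut n h" "fixes_closed_nbhd n h" and z: "z \<in> alt_grp n"
    and a: "a \<in> alt_grp n" "h a = a" "cay3_adj a z"
    and b: "b \<in> alt_grp n" "h b = b" "cay3_adj b z" "b \<circ> b' = id" "bij b'"
    and c: "c \<in> alt_grp n" "h c = c" "cay3_adj c z" "c \<circ> c' = id" "bij c'"
    and L: "distinct L" "moved a \<subseteq> set L" "moved (a \<circ> b') \<subseteq> set L" "moved (a \<circ> c') \<subseteq> set L"
      "5 \<le> card (moved (a \<circ> b'))"
    and check: "\<And>q r s. q \<in> set L \<Longrightarrow> r \<in> set L \<Longrightarrow> s \<in> set L \<Longrightarrow> q \<noteq> r \<Longrightarrow> r \<noteq> s \<Longrightarrow> q \<noteq> s \<Longrightarrow>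
      count_moved L (cyc3 q r s \<circ> (a \<circ> b')) = 3 \<Longrightarrow> count_moved L (cyc3 q r s \<circ> (a \<circ> c')) = 3 \<Longrightarrow>
      cyc3 q r s \<circ> a = z \<or> cyc3 q r s \<circ> a = id \<or> count_moved L (cyc3 q r s \<circ> a) = 3"
  shows "h z = z"
proof (rule fixed_if_common_neighbours_fixed[OF h z, where V = "{a, b, c}"])
  show "\<And>v. v \<in> {a, b, c} \<Longrightarrow> v \<in> alt_grp n \<and> h v = v \<and> cay3_adj v z" using a b c by blast
  fix y assume "\<forall>v\<in>{a, b, c}. cay3_adj v y"
  then have adj: "cay3_adj a y" "cay3_adj b y" "cay3_adj c y" by auto
  obtain q r s where qrs: "q \<in> set L" "r \<in> set L" "s \<in> set L" "q \<noteq> r" "r \<noteq> s" "q \<noteq> s"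
      and y: "y = cyc3 q r s \<circ> a" and yb: "is_3cycle (cyc3 q r s \<circ> (a \<circ> b'))"
    using common_neighbour_in_window[OF adj(1,2) b(4) L(5,3)] .
  note count = is_3cycle_cyc3_comp_iff_count_moved[OF qrs _ _ L(1)]
  have ab: "bij a" using alt_grp_bij[OF a(1)] .
  have "is_3cycle (cyc3 q r s \<circ> (a \<circ> c'))"
    using cay3_adj_right_inverse[OF adj(3) c(4)] y by (simp add: comp_assoc)
  then have yc: "count_moved L (cyc3 q r s \<circ> (a \<circ> c')) = 3"
    using count[OF bij_comp[OF c(5) ab] L(4)] by simp
  have yb': "count_moved L (cyc3 q r s \<circ> (a \<circ> b')) = 3"
    using yb count[OF bij_comp[OF b(5) ab] L(3)] by simp
  from check[OF qrs yb' yc] show "y = z \<or> y = id \<or> is_3cycle y"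
    using y count[OF ab L(2)] by simp
qed

definition pinned :: "nat \<Rightarrow> (nat \<Rightarrow> nat) \<Rightarrow> bool" where
  "pinned n z \<longleftrightarrow> (\<forall>h. cay3_aut n h \<and> fixes_closed_nbhd n h \<longrightarrow> h z = z)"

lemma pinned_conj:
  assumes z: "pinned n z" and s: "s permutes {1..n}"
  shows "pinned n (s \<circ> z \<circ> inv s)"
  unfolding pinned_def
proof (intro allI impI, elim conjE)
  fix h assume h: "cay3_aut n h" "fixes_closed_nbhd n h"
  have b: "bij s" using permutes_bij[OF s] .
  define c where "c y = s \<circ> y \<circ> inv s" for y
  define c' where "c' y = inv s \<circ> y \<circ> inv (inv s)" for y
  have undo: "c' (c y) = y" "c (c' y) = y" for y
    unfolding c_def c'_def using conj_inv_cancel[OF b] by simp_all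
  have "cay3_aut n (c' \<circ> h \<circ> c)"
    unfolding c_def c'_def
    by (intro cay3_aut_comp cay3_aut_conj h(1) s permutes_inv)
  moreover have "fixes_closed_nbhd n (c' \<circ> h \<circ> c)"
    unfolding fixes_closed_nbhd_def
  proof
    show "(c' \<circ> h \<circ> c) id = id"
      using h(2) undo(1)[of id] unfolding fixes_closed_nbhd_def c_def by (simp add: bij_inv_cancel[OF b])
    show "\<forall>t\<in>three_cycles n. (c' \<circ> h \<circ> c) t = t"
    proof
      fix t assume "t \<in> three_cycles n"
      then have "c t \<in> three_cycles n"
        unfolding c_def three_cycles_iff using is_3cycle_conj[OF b] alt_grp_conj[OF s] by blast
      then show "(c' \<circ> h \<circ> c) t = t" using h(2) undo(1) unfolding fixes_closed_nbhd_def by simp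
    qed
  qed
  ultimately have "(c' \<circ> h \<circ> c) z = z" using z unfolding pinned_def by blast
  then have "c (c' (h (c z))) = c z" by simp
  then have "h (c z) = c z" by (simp only: undo(2))
  then show "h (s \<circ> z \<circ> inv s) = s \<circ> z \<circ> inv s" unfolding c_def .
qed

lemma window_check_one_common_point:
  fixes q r s :: nat
  assumes "q \<in> set [1, 2, 3, 4, 5]" "r \<in> set [1, 2, 3, 4, 5]" "s \<in> set [1, 2, 3, 4, 5]"
    "q \<noteq> r" "r \<noteq> s" "q \<noteq> s"
    "count_moved [1, 2, 3, 4, 5] (cyc3 q r s \<circ> (cyc3 1 4 5 \<circ> cyc3 2 4 3)) = 3"
    "count_moved [1, 2, 3, 4, 5] (cyc3 q r s \<circ> (cyc3 1 4 5 \<circ> cyc3 1 3 2)) = 3"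
  shows "cyc3 q r s \<circ> cyc3 1 4 5 = cyc3 3 1 2 \<circ> cyc3 3 4 5 \<or> cyc3 q r s \<circ> cyc3 1 4 5 = id \<or>
    count_moved [1, 2, 3, 4, 5] (cyc3 q r s \<circ> cyc3 1 4 5) = 3"
  using assms unfolding count_moved_def
  apply (simp only: set_simps insert_iff empty_iff)
  apply (elim disjE)
  apply (simp_all add: cyc3_def)
  apply (auto simp: fun_eq_iff cyc3_def)
  done

lemma pinned_cyc3_pair_one_common_point:
  assumes n: "5 \<le> n"
  shows "pinned n (cyc3 3 1 2 \<circ> cyc3 3 4 5)"
  unfolding pinned_def
proof (intro allI impI, elim conjE)
  fix h assume h: "cay3_aut n h" "fixes_closed_nbhd n h"
  have r: "(1::nat) \<in> {1..n}" "(2::nat) \<in> {1..n}" "(3::nat) \<in> {1..n}" "(4::nat) \<in> {1..n}" "(5::nat) \<in> {1..n}"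
    using n by auto
  have m: "moved (cyc3 1 4 5 \<circ> cyc3 2 4 3) = {1, 2, 3, 4, 5}"
    "moved (cyc3 1 4 5 \<circ> cyc3 1 3 2) \<subseteq> {1, 2, 3, 4, 5}" "moved (cyc3 1 4 5) \<subseteq> {1, 2, 3, 4, 5}"
    by (auto simp: moved_def cyc3_def split: if_splits)
  show "h (cyc3 3 1 2 \<circ> cyc3 3 4 5) = cyc3 3 1 2 \<circ> cyc3 3 4 5"
  proof (rule fixed_by_window_check[OF h, where a = "cyc3 1 4 5" and b = "cyc3 2 3 4"
        and b' = "cyc3 2 4 3" and c = "cyc3 1 2 3" and c' = "cyc3 1 3 2" and L = "[1, 2, 3, 4, 5]"])
    show "cyc3 3 1 2 \<circ> cyc3 3 4 5 \<in> alt_grp n" using r by (intro alt_grp_comp cyc3_in_alt_grp) auto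
    show "cyc3 1 4 5 \<in> alt_grp n" "cyc3 2 3 4 \<in> alt_grp n" "cyc3 1 2 3 \<in> alt_grp n"
      using r by (auto intro!: cyc3_in_alt_grp)
    show "h (cyc3 1 4 5) = cyc3 1 4 5" "h (cyc3 2 3 4) = cyc3 2 3 4" "h (cyc3 1 2 3) = cyc3 1 2 3"
      using r by (auto intro!: fixes_closed_nbhd_cyc3[OF h(2)])
    show "cay3_adj (cyc3 1 4 5) (cyc3 3 1 2 \<circ> cyc3 3 4 5)"
      by (rule cay3_adj_by_cyc3[of 2 3 4]) (auto simp: fun_eq_iff cyc3_def)
    show "cay3_adj (cyc3 2 3 4) (cyc3 3 1 2 \<circ> cyc3 3 4 5)"
      by (rule cay3_adj_by_cyc3[of 1 2 5]) (auto simp: fun_eq_iff cyc3_def)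
    show "cay3_adj (cyc3 1 2 3) (cyc3 3 1 2 \<circ> cyc3 3 4 5)"
      by (rule cay3_adj_by_cyc3[of 1 4 5]) (auto simp: fun_eq_iff cyc3_def)
    show "cyc3 2 3 4 \<circ> cyc3 2 4 3 = id" "cyc3 1 2 3 \<circ> cyc3 1 3 2 = id"
      by (auto simp: fun_eq_iff cyc3_def)
    show "bij (cyc3 2 4 3)" "bij (cyc3 1 3 2)" by (auto intro: bij_cyc3)
    show "distinct [1, 2, 3, 4, 5::nat]" by simp
    show "moved (cyc3 1 4 5) \<subseteq> set [1, 2, 3, 4, 5]" "moved (cyc3 1 4 5 \<circ> cyc3 2 4 3) \<subseteq> set [1, 2, 3, 4, 5]"
      "moved (cyc3 1 4 5 \<circ> cyc3 1 3 2) \<subseteq> set [1, 2, 3, 4, 5]"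
      "5 \<le> card (moved (cyc3 1 4 5 \<circ> cyc3 2 4 3))"
      using m by simp_all
  qed (rule window_check_one_common_point)
qed

lemma pinned_id: "pinned n id"
  unfolding pinned_def fixes_closed_nbhd_def by blast

lemma pinned_three_cycle: "t \<in> three_cycles n \<Longrightarrow> pinned n t"
  unfolding pinned_def fixes_closed_nbhd_def by blast

lemma conj_cyc3_comp_cyc3:
  "bij s \<Longrightarrow> s \<circ> (cyc3 i j k \<circ> cyc3 a b c) \<circ> inv s = cyc3 (s i) (s j) (s k) \<circ> cyc3 (s a) (s b) (s c)"
  by (simp add: conj_comp conj_cyc3)

lemma permutes_onto_list:
  assumes "distinct P" "set P \<subseteq> {1..n}"
  shows "\<exists>s. s permutes {1..n} \<and> (\<forall>l < length P. s (Suc l) = P ! l)"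
  using assms
proof (induction P rule: rev_induct)
  case Nil
  show ?case by (intro exI[of _ id] conjI permutes_id) simp
next
  case (snoc p Q)
  have "distinct Q" "set Q \<subseteq> {1..n}" using snoc.prems by simp_all
  then obtain s where s: "s permutes {1..n}" "\<forall>l < length Q. s (Suc l) = Q ! l"
    using snoc.IH by blast
  let ?m = "length Q"
  have "Suc ?m = card (set (Q @ [p]))" using distinct_card[OF snoc.prems(1)] by simp
  also have "\<dots> \<le> n" using card_mono[OF finite_atLeastAtMost snoc.prems(2)] by simp
  finally have m: "Suc ?m \<in> {1..n}" by simp
  define u where "u = inv s p"
  have p: "p \<in> {1..n}" using snoc.prems(2) by simp
  have u: "u \<in> {1..n}" "s u = p"
    unfolding u_def using permutes_in_image[OF permutes_inv[OF s(1)]] p apply blast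
    using permutes_inverses(1)[OF s(1)] by blast
  let ?s = "s \<circ> transpose (Suc ?m) u"
  have "?s (Suc l) = (Q @ [p]) ! l" if l: "l < length (Q @ [p])" for l
  proof (cases "l = ?m")
    case True
    then show ?thesis using u by (simp add: nth_append)
  next
    case False
    then have lm: "l < ?m" using l by simp
    have "s (Suc l) = Q ! l" using s(2) lm by blast
    moreover have "Q ! l \<noteq> p" using snoc.prems(1) lm by (auto simp: nth_mem)
    ultimately have "Suc l \<noteq> u" using u(2) by auto
    then show ?thesis using lm s(2) by (simp add: nth_append transpose_def)
  qed
  then show ?case using permutes_compose[OF permutes_swap_id[OF m u(1)] s(1)] by blast
qed

lemma length_le_if_distinct_subset: "distinct P \<Longrightarrow> set P \<subseteq> {1..n} \<Longrightarrow> length P \<le> n"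
  using card_mono[OF finite_atLeastAtMost, of "set P" 1 n] distinct_card by fastforce

lemma pinned_cyc3_pair_one_common_point_general:
  assumes d: "distinct [j, k, x, b, c]" and r: "set [j, k, x, b, c] \<subseteq> {1..n}"
  shows "pinned n (cyc3 x j k \<circ> cyc3 x b c)"
proof -
  obtain s where s: "s permutes {1..n}" and sv: "\<forall>l < 5. s (Suc l) = [j, k, x, b, c] ! l"
    using permutes_onto_list[OF d r] by auto
  have v: "s 1 = j" "s 2 = k" "s 3 = x" "s 4 = b" "s 5 = c"
    using sv[rule_format, of 0] sv[rule_format, of 1] sv[rule_format, of 2] sv[rule_format, of 3]
      sv[rule_format, of 4] by (simp_all add: numeral_eq_Suc)
  have "5 \<le> n" using length_le_if_distinct_subset[OF d r] by simp
  from pinned_conj[OF pinned_cyc3_pair_one_common_point[OF this] s] show ?thesis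
    by (simp add: conj_cyc3_comp_cyc3[OF permutes_bij[OF s]] v del: One_nat_def)
qed

lemma window_check_disjoint:
  fixes q r s :: nat
  assumes "q \<in> set [1, 2, 3, 4, 5, 6]" "r \<in> set [1, 2, 3, 4, 5, 6]" "s \<in> set [1, 2, 3, 4, 5, 6]"
    "q \<noteq> r" "r \<noteq> s" "q \<noteq> s"
    "count_moved [1, 2, 3, 4, 5, 6] (cyc3 q r s \<circ> (cyc3 1 2 3 \<circ> cyc3 4 6 5)) = 3"
  shows "cyc3 q r s \<circ> cyc3 1 2 3 = cyc3 1 2 3 \<circ> cyc3 4 5 6 \<or> cyc3 q r s \<circ> cyc3 1 2 3 = id \<or>
    count_moved [1, 2, 3, 4, 5, 6] (cyc3 q r s \<circ> cyc3 1 2 3) = 3"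
  using assms unfolding count_moved_def
  apply (simp only: set_simps insert_iff empty_iff)
  apply (elim disjE)
  apply (simp_all add: cyc3_def)
  apply (auto simp: fun_eq_iff cyc3_def)
  done

lemma pinned_cyc3_pair_disjoint:
  assumes n: "6 \<le> n"
  shows "pinned n (cyc3 1 2 3 \<circ> cyc3 4 5 6)"
  unfolding pinned_def
proof (intro allI impI, elim conjE)
  fix h assume h: "cay3_aut n h" "fixes_closed_nbhd n h"
  have r: "(1::nat) \<in> {1..n}" "(2::nat) \<in> {1..n}" "(3::nat) \<in> {1..n}" "(4::nat) \<in> {1..n}"
    "(5::nat) \<in> {1..n}" "(6::nat) \<in> {1..n}"
    using n by auto
  have m: "moved (cyc3 1 2 3 \<circ> cyc3 4 6 5) = {1, 2, 3, 4, 5, 6}"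
    "moved (cyc3 1 2 3 \<circ> cyc3 1 3 2) \<subseteq> {1, 2, 3, 4, 5, 6}" "moved (cyc3 1 2 3) \<subseteq> {1, 2, 3, 4, 5, 6}"
    by (auto simp: moved_def cyc3_def split: if_splits)
  show "h (cyc3 1 2 3 \<circ> cyc3 4 5 6) = cyc3 1 2 3 \<circ> cyc3 4 5 6"
  proof (rule fixed_by_window_check[OF h, where a = "cyc3 1 2 3" and b = "cyc3 4 5 6"
        and b' = "cyc3 4 6 5" and c = "cyc3 1 2 3" and c' = "cyc3 1 3 2" and L = "[1, 2, 3, 4, 5, 6]"])
    show "cyc3 1 2 3 \<circ> cyc3 4 5 6 \<in> alt_grp n" using r by (intro alt_grp_comp cyc3_in_alt_grp) auto
    show "cyc3 1 2 3 \<in> alt_grp n" "cyc3 1 2 3 \<in> alt_grp n" "cyc3 4 5 6 \<in> alt_grp n"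
      using r by (auto intro!: cyc3_in_alt_grp)
    show "h (cyc3 1 2 3) = cyc3 1 2 3" "h (cyc3 1 2 3) = cyc3 1 2 3" "h (cyc3 4 5 6) = cyc3 4 5 6"
      using r by (auto intro!: fixes_closed_nbhd_cyc3[OF h(2)])
    show "cay3_adj (cyc3 1 2 3) (cyc3 1 2 3 \<circ> cyc3 4 5 6)" "cay3_adj (cyc3 1 2 3) (cyc3 1 2 3 \<circ> cyc3 4 5 6)"
      by (rule cay3_adj_by_cyc3[of 4 5 6]; auto simp: fun_eq_iff cyc3_def)+
    show "cay3_adj (cyc3 4 5 6) (cyc3 1 2 3 \<circ> cyc3 4 5 6)"
      by (rule cay3_adj_by_cyc3[of 1 2 3]) auto
    show "cyc3 4 5 6 \<circ> cyc3 4 6 5 = id" "cyc3 1 2 3 \<circ> cyc3 1 3 2 = id"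
      by (auto simp: fun_eq_iff cyc3_def)
    show "bij (cyc3 4 6 5)" "bij (cyc3 1 3 2)" by (auto intro: bij_cyc3)
    show "distinct [1, 2, 3, 4, 5, 6::nat]" by simp
    show "moved (cyc3 1 2 3) \<subseteq> set [1, 2, 3, 4, 5, 6]"
      "moved (cyc3 1 2 3 \<circ> cyc3 4 6 5) \<subseteq> set [1, 2, 3, 4, 5, 6]"
      "moved (cyc3 1 2 3 \<circ> cyc3 1 3 2) \<subseteq> set [1, 2, 3, 4, 5, 6]"
      "5 \<le> card (moved (cyc3 1 2 3 \<circ> cyc3 4 6 5))"
      using m by simp_all
  qed (rule window_check_disjoint)
qed

lemma pinned_cyc3_pair_disjoint_general:
  assumes d: "distinct [i, j, k, a, b, c]" and r: "set [i, j, k, a, b, c] \<subseteq> {1..n}"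
  shows "pinned n (cyc3 i j k \<circ> cyc3 a b c)"
proof -
  obtain s where s: "s permutes {1..n}" and sv: "\<forall>l < 6. s (Suc l) = [i, j, k, a, b, c] ! l"
    using permutes_onto_list[OF d r] by auto
  have v: "s 1 = i" "s 2 = j" "s 3 = k" "s 4 = a" "s 5 = b" "s 6 = c"
    using sv[rule_format, of 0] sv[rule_format, of 1] sv[rule_format, of 2] sv[rule_format, of 3]
      sv[rule_format, of 4] sv[rule_format, of 5] by (simp_all add: numeral_eq_Suc)
  have "6 \<le> n" using length_le_if_distinct_subset[OF d r] by simp
  from pinned_conj[OF pinned_cyc3_pair_disjoint[OF this] s] show ?thesis
    by (simp add: conj_cyc3_comp_cyc3[OF permutes_bij[OF s]] v del: One_nat_def)
qed

lemma window_check_two_common_points: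
  fixes q r s :: nat
  assumes "q \<in> set [1, 2, 3, 4, 5]" "r \<in> set [1, 2, 3, 4, 5]" "s \<in> set [1, 2, 3, 4, 5]"
    "q \<noteq> r" "r \<noteq> s" "q \<noteq> s"
    "count_moved [1, 2, 3, 4, 5] (cyc3 q r s \<circ> (cyc3 1 4 3 \<circ> (cyc3 3 2 4 \<circ> cyc3 3 5 1))) = 3"
    "count_moved [1, 2, 3, 4, 5] (cyc3 q r s \<circ> (cyc3 1 4 3 \<circ> cyc3 2 3 4)) = 3"
  shows "cyc3 q r s \<circ> cyc3 1 4 3 = cyc3 1 3 2 \<circ> cyc3 1 3 4 \<or> cyc3 q r s \<circ> cyc3 1 4 3 = id \<or>
    count_moved [1, 2, 3, 4, 5] (cyc3 q r s \<circ> cyc3 1 4 3) = 3"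
  using assms unfolding count_moved_def
  apply (simp only: set_simps insert_iff empty_iff)
  apply (elim disjE)
  apply (simp_all add: cyc3_def)
  apply (auto simp: fun_eq_iff cyc3_def)
  done

lemma pinned_cyc3_pair_two_common_points:
  assumes n: "5 \<le> n"
  shows "pinned n (cyc3 1 3 2 \<circ> cyc3 1 3 4)"
  unfolding pinned_def
proof (intro allI impI, elim conjE)
  fix h assume h: "cay3_aut n h" "fixes_closed_nbhd n h"
  have r: "(1::nat) \<in> {1..n}" "(2::nat) \<in> {1..n}" "(3::nat) \<in> {1..n}" "(4::nat) \<in> {1..n}"
    "(5::nat) \<in> {1..n}"
    using n by auto
  have m: "moved (cyc3 1 4 3 \<circ> (cyc3 3 2 4 \<circ> cyc3 3 5 1)) = {1, 2, 3, 4, 5}"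
    "moved (cyc3 1 4 3 \<circ> cyc3 2 3 4) \<subseteq> {1, 2, 3, 4, 5}" "moved (cyc3 1 4 3) \<subseteq> {1, 2, 3, 4, 5}"
    by (auto simp: moved_def cyc3_def split: if_splits)
  show "h (cyc3 1 3 2 \<circ> cyc3 1 3 4) = cyc3 1 3 2 \<circ> cyc3 1 3 4"
  proof (rule fixed_by_window_check[OF h, where a = "cyc3 1 4 3" and b = "cyc3 3 1 5 \<circ> cyc3 3 4 2"
        and b' = "cyc3 3 2 4 \<circ> cyc3 3 5 1" and c = "cyc3 2 4 3" and c' = "cyc3 2 3 4"
        and L = "[1, 2, 3, 4, 5]"])
    show "cyc3 1 3 2 \<circ> cyc3 1 3 4 \<in> alt_grp n" "cyc3 3 1 5 \<circ> cyc3 3 4 2 \<in> alt_grp n"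
      using r by (intro alt_grp_comp cyc3_in_alt_grp; simp)+
    show "cyc3 1 4 3 \<in> alt_grp n" "cyc3 2 4 3 \<in> alt_grp n" using r by (auto intro!: cyc3_in_alt_grp)
    show "h (cyc3 1 4 3) = cyc3 1 4 3" "h (cyc3 2 4 3) = cyc3 2 4 3"
      using r by (auto intro!: fixes_closed_nbhd_cyc3[OF h(2)])
    have "pinned n (cyc3 3 1 5 \<circ> cyc3 3 4 2)"
      using pinned_cyc3_pair_one_common_point_general[of 1 5 3 4 2 n] r by simp
    then show "h (cyc3 3 1 5 \<circ> cyc3 3 4 2) = cyc3 3 1 5 \<circ> cyc3 3 4 2"
      using h unfolding pinned_def by blast
    show "cay3_adj (cyc3 1 4 3) (cyc3 1 3 2 \<circ> cyc3 1 3 4)"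
      by (rule cay3_adj_by_cyc3[of 1 4 2]) (auto simp: fun_eq_iff cyc3_def)
    show "cay3_adj (cyc3 3 1 5 \<circ> cyc3 3 4 2) (cyc3 1 3 2 \<circ> cyc3 1 3 4)"
      by (rule cay3_adj_by_cyc3[of 2 3 5]) (auto simp: fun_eq_iff cyc3_def)
    show "cay3_adj (cyc3 2 4 3) (cyc3 1 3 2 \<circ> cyc3 1 3 4)"
      by (rule cay3_adj_by_cyc3[of 1 2 4]) (auto simp: fun_eq_iff cyc3_def)
    show "cyc3 3 1 5 \<circ> cyc3 3 4 2 \<circ> (cyc3 3 2 4 \<circ> cyc3 3 5 1) = id" "cyc3 2 4 3 \<circ> cyc3 2 3 4 = id"
      by (auto simp: fun_eq_iff cyc3_def)
    show "bij (cyc3 3 2 4 \<circ> cyc3 3 5 1)" "bij (cyc3 2 3 4)" by (auto intro!: bij_cyc3 bij_comp)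
    show "distinct [1, 2, 3, 4, 5::nat]" by simp
    show "moved (cyc3 1 4 3) \<subseteq> set [1, 2, 3, 4, 5]"
      "moved (cyc3 1 4 3 \<circ> (cyc3 3 2 4 \<circ> cyc3 3 5 1)) \<subseteq> set [1, 2, 3, 4, 5]"
      "moved (cyc3 1 4 3 \<circ> cyc3 2 3 4) \<subseteq> set [1, 2, 3, 4, 5]"
      "5 \<le> card (moved (cyc3 1 4 3 \<circ> (cyc3 3 2 4 \<circ> cyc3 3 5 1)))"
      using m by simp_all
  qed (rule window_check_two_common_points)
qed

lemma pinned_cyc3_pair_two_common_points_general:
  assumes n: "5 \<le> n" and d: "distinct [x, k, y, c]" and r: "set [x, k, y, c] \<subseteq> {1..n}"
  shows "pinned n (cyc3 x y k \<circ> cyc3 x y c)"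
proof -
  obtain s where s: "s permutes {1..n}" and sv: "\<forall>l < 4. s (Suc l) = [x, k, y, c] ! l"
    using permutes_onto_list[OF d r] by auto
  have v: "s 1 = x" "s 2 = k" "s 3 = y" "s 4 = c"
    using sv[rule_format, of 0] sv[rule_format, of 1] sv[rule_format, of 2] sv[rule_format, of 3]
    by (simp_all add: numeral_eq_Suc)
  from pinned_conj[OF pinned_cyc3_pair_two_common_points[OF n] s] show ?thesis
    by (simp add: conj_cyc3_comp_cyc3[OF permutes_bij[OF s]] v del: One_nat_def)
qed

lemma pinned_cyc3_pair_common_point:
  assumes n: "5 \<le> n"
    and r: "x \<in> {1..n}" "j \<in> {1..n}" "l \<in> {1..n}" "b \<in> {1..n}" "c \<in> {1..n}"
    and d: "x \<noteq> j" "j \<noteq> l" "x \<noteq> l" "x \<noteq> b" "b \<noteq> c" "x \<noteq> c"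
  shows "pinned n (cyc3 x j l \<circ> cyc3 x b c)"
proof -
  consider "j \<notin> {b, c}" "l \<notin> {b, c}" | "j = b" "l = c" | "j = b" "l \<notin> {b, c}" | "j = c" "l = b"
    | "j = c" "l \<notin> {b, c}" | "j \<notin> {b, c}" "l = b" | "j \<notin> {b, c}" "l = c"
    using d by blast
  then show ?thesis
  proof cases
    case 1
    then show ?thesis using pinned_cyc3_pair_one_common_point_general[of j l x b c] r d by auto
  next
    case 2
    then have "cyc3 x j l \<circ> cyc3 x b c = cyc3 x c b" using d by (auto simp: fun_eq_iff cyc3_def)
    then show ?thesis using pinned_three_cycle cyc3_in_three_cycles r d by metis
  next
    case 3
    then show ?thesis using pinned_cyc3_pair_two_common_points_general[OF n, of x l b c] r d by auto
  next
    case 4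
    then have "cyc3 x j l \<circ> cyc3 x b c = id" using d by (auto simp: fun_eq_iff cyc3_def)
    then show ?thesis using pinned_id by metis
  next
    case 5
    then have "cyc3 x j l \<circ> cyc3 x b c = cyc3 x b l" using d by (auto simp: fun_eq_iff cyc3_def)
    then show ?thesis using pinned_three_cycle cyc3_in_three_cycles r d 5 by (metis insertCI)
  next
    case 6
    then have "cyc3 x j l \<circ> cyc3 x b c = cyc3 b c j" using d by (auto simp: fun_eq_iff cyc3_def)
    then show ?thesis using pinned_three_cycle cyc3_in_three_cycles r d 6 by (metis insertCI)
  next
    case 7
    then have "cyc3 x j l \<circ> cyc3 x b c = cyc3 c x j \<circ> cyc3 c x b" using d by (auto simp: fun_eq_iff cyc3_def)
    then show ?thesis using pinned_cyc3_pair_two_common_points_general[OF n, of c j x b] r d 7 by auto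
  qed
qed

lemma moved_subset_if_permutes: "p permutes S \<Longrightarrow> moved p \<subseteq> S"
  unfolding moved_def using permutes_not_in by fastforce

lemma pinned_comp_three_cycles:
  assumes n: "5 \<le> n" and t: "t \<in> three_cycles n" and u: "u \<in> three_cycles n"
  shows "pinned n (t \<circ> u)"
proof -
  have t3: "is_3cycle t" and u3: "is_3cycle u" and range: "moved t \<union> moved u \<subseteq> {1..n}"
    using t u three_cycles_iff alt_grp_permutes moved_subset_if_permutes by (metis Un_least)+
  show ?thesis
  proof (cases "moved t \<inter> moved u = {}")
    case True
    obtain i j k a b c where d: "i \<noteq> j" "j \<noteq> k" "i \<noteq> k" "a \<noteq> b" "b \<noteq> c" "a \<noteq> c"
      and tu: "t = cyc3 i j k" "u = cyc3 a b c"
      using t3 u3 unfolding is_3cycle_def by blast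
    have "distinct [i, j, k, a, b, c]" "set [i, j, k, a, b, c] \<subseteq> {1..n}"
      using True range d by (auto simp: tu moved_cyc3)
    then show ?thesis using pinned_cyc3_pair_disjoint_general tu by simp
  next
    case False
    then obtain x where "x \<in> moved t" "x \<in> moved u" by blast
    obtain j l where tx: "x \<noteq> j" "j \<noteq> l" "x \<noteq> l" "t = cyc3 x j l"
      using cyc3_starting_at[OF t3 \<open>x \<in> moved t\<close>] by blast
    obtain b c where ux: "x \<noteq> b" "b \<noteq> c" "x \<noteq> c" "u = cyc3 x b c"
      using cyc3_starting_at[OF u3 \<open>x \<in> moved u\<close>] by blast
    have "{x, j, l, b, c} \<subseteq> {1..n}" using range tx ux by (auto simp: moved_cyc3)
    then show ?thesis using pinned_cyc3_pair_common_point[OF n] tx ux by simp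
  qed
qed

section \<open>Automorphisms fixing the neighbourhood of the identity\<close>

inductive_set three_cycle_words :: "nat \<Rightarrow> (nat \<Rightarrow> nat) set" for n where
  id_word: "id \<in> three_cycle_words n"
| cons_word: "t \<in> three_cycles n \<Longrightarrow> x \<in> three_cycle_words n \<Longrightarrow> t \<circ> x \<in> three_cycle_words n"

lemma transpose_pair_word:
  assumes r: "u \<in> {1..n}" "v \<in> {1..n}" "a \<in> {1..n}" "b \<in> {1..n}" and d: "u \<noteq> v" "a \<noteq> b"
    and x: "x \<in> three_cycle_words n"
  shows "transpose u v \<circ> transpose a b \<circ> x \<in> three_cycle_words n"
proof -
  have chain: "transpose p q \<circ> transpose q w \<circ> x \<in> three_cycle_words n"
    if "p \<in> {1..n}" "q \<in> {1..n}" "w \<in> {1..n}" "p \<noteq> q" "q \<noteq> w" "p \<noteq> w" for p q w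
    using cons_word[OF cyc3_in_three_cycles[OF that] x] cyc3_eq_transpose_comp[OF that(4-6)] by simp
  consider "{u, v} = {a, b}" | "v = a" "u \<noteq> b" | "v = b" "u \<noteq> a" | "u = a" "v \<noteq> b"
    | "u = b" "v \<noteq> a" | "u \<notin> {a, b}" "v \<notin> {a, b}" by blast
  then show ?thesis
  proof cases
    case 1
    then have "transpose u v \<circ> transpose a b = id"
      using d by (auto simp: fun_eq_iff transpose_def doubleton_eq_iff)
    then show ?thesis using x by (metis id_comp)
  next
    case 2 then show ?thesis using chain[of u v b] r d by auto
  next
    case 3 then show ?thesis using chain[of u v a] r d transpose_commute[of a b] by auto
  next
    case 4 then show ?thesis using chain[of v u b] r d transpose_commute[of u v] by auto
  next
    case 5 then show ?thesis using chain[of v u a] r d transpose_commute[of u v] transpose_commute[of a b] by auto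
  next
    case 6
    have "transpose u v \<circ> transpose a b \<circ> x = cyc3 u v a \<circ> (cyc3 v a b \<circ> x)"
      using 6 d by (auto simp: fun_eq_iff transpose_def cyc3_def)
    then show ?thesis using cons_word[OF _ cons_word[OF _ x]] cyc3_in_three_cycles r d 6 by auto
  qed
qed

lemma alt_grp_subset_three_cycle_words:
  assumes n: "2 \<le> n"
  shows "alt_grp n \<subseteq> three_cycle_words n"
proof
  fix p assume p: "p \<in> alt_grp n"
  have r12: "(1::nat) \<in> {1..n}" "(2::nat) \<in> {1..n}" "(1::nat) \<noteq> 2" using n by auto
  text \<open>Induction over products of transpositions, carrying along the odd case \<open>(1 2) \<circ> p\<close>.\<close>
  have "(evenperm p \<longrightarrow> p \<in> three_cycle_words n) \<and> (\<not> evenperm p \<longrightarrow> transpose 1 2 \<circ> p \<in> three_cycle_words n)"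
    using alt_grp_permutes[OF p] finite_atLeastAtMost
  proof (induction p rule: permutes_induct)
    case id
    show ?case using id_word[of n] by (simp del: id_apply)
  next
    case (swap a b p)
    have "permutation p" using swap.hyps(4) finite_atLeastAtMost permutation_permutes by blast
    then have ev: "evenperm (transpose a b \<circ> p) \<longleftrightarrow> \<not> evenperm p"
      using swap.hyps(3) by (simp add: evenperm_comp permutation_swap_id evenperm_swap)
    show ?case
    proof (cases "evenperm p")
      case True
      then have "transpose 1 2 \<circ> transpose a b \<circ> p \<in> three_cycle_words n"
        using transpose_pair_word[OF r12(1,2) swap.hyps(1,2) r12(3) swap.hyps(3)] swap.IH by simp
      then have "transpose 1 2 \<circ> (transpose a b \<circ> p) \<in> three_cycle_words n" by (simp only: comp_assoc)
      then show ?thesis using ev True by blast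
    next
      case False
      have "transpose a b \<circ> p = transpose a b \<circ> transpose 1 2 \<circ> (transpose 1 2 \<circ> p)"
        by (simp add: fun_eq_iff)
      moreover have "transpose a b \<circ> transpose 1 2 \<circ> (transpose 1 2 \<circ> p) \<in> three_cycle_words n"
        using transpose_pair_word[OF swap.hyps(1,2) r12(1,2) swap.hyps(3) r12(3)] swap.IH False by blast
      ultimately have "transpose a b \<circ> p \<in> three_cycle_words n" by metis
      then show ?thesis using ev False by blast
    qed
  qed
  then show "p \<in> three_cycle_words n" using p unfolding alt_grp_def by blast
qed

lemma cay3_aut_right_translate:
  assumes "cay3_aut n h" "x \<in> alt_grp n"
  shows "cay3_aut n (\<lambda>y. h (y \<circ> x) \<circ> inv x)"
proof -
  have "(\<lambda>y. h (y \<circ> x) \<circ> inv x) = (\<lambda>y. y \<circ> inv x) \<circ> h \<circ> (\<lambda>y. y \<circ> x)" by (simp add: fun_eq_iff)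
  then show ?thesis
    using assms by (simp add: cay3_aut_comp cay3_aut_right_mult alt_grp_inv)
qed

text \<open>If \<open>x\<close> and its neighbours are fixed, translating by \<open>x\<close> reduces to the neighbourhood
  of \<open>id\<close>, so all vertices at distance two from \<open>x\<close> are fixed; induct along words in 3-cycles.\<close>
theorem cay3_aut_fixing_closed_nbhd_is_id:
  assumes h: "cay3_aut n h" "fixes_closed_nbhd n h" and n: "5 \<le> n" and x: "x \<in> alt_grp n"
  shows "h x = x"
proof -
  have "x \<in> alt_grp n \<and> h x = x \<and> (\<forall>t\<in>three_cycles n. h (t \<circ> x) = t \<circ> x)"
    if "x \<in> three_cycle_words n" for x
    using that
  proof (induction x rule: three_cycle_words.induct)
    case id_word
    have "\<forall>t\<in>three_cycles n. h (t \<circ> id) = t \<circ> id" using h(2) unfolding fixes_closed_nbhd_def by simp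
    then show ?case using h(2) id_in_alt_grp unfolding fixes_closed_nbhd_def by blast
  next
    case (cons_word u x)
    then have x: "x \<in> alt_grp n" "h x = x" "\<forall>t\<in>three_cycles n. h (t \<circ> x) = t \<circ> x" by blast+
    have ux: "u \<circ> x \<in> alt_grp n" using alt_grp_comp cons_word.hyps(1) x(1) three_cycles_iff by blast
    let ?h = "\<lambda>y. h (y \<circ> x) \<circ> inv x"
    have "fixes_closed_nbhd n ?h"
      using x bij_inv_cancel(1)[OF alt_grp_bij[OF x(1)]] unfolding fixes_closed_nbhd_def
      by (simp add: comp_assoc)
    then have "?h (t \<circ> u) = t \<circ> u" if "t \<in> three_cycles n" for t
      using pinned_comp_three_cycles[OF n that cons_word.hyps(1)] cay3_aut_right_translate[OF h(1) x(1)]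
      unfolding pinned_def by blast
    then have "h (t \<circ> u \<circ> x) \<circ> (inv x \<circ> x) = t \<circ> u \<circ> x" if "t \<in> three_cycles n" for t
      using that by (simp flip: comp_assoc)
    then have "h (t \<circ> (u \<circ> x)) = t \<circ> (u \<circ> x)" if "t \<in> three_cycles n" for t
      using that by (simp add: comp_assoc bij_inv_cancel(2)[OF alt_grp_bij[OF x(1)]])
    then show ?case using ux x(3) cons_word.hyps(1) by (simp add: comp_def)
  qed
  moreover have "x \<in> three_cycle_words n"
    using alt_grp_subset_three_cycle_words[of n] n x by force
  ultimately show ?thesis by blast
qed

section \<open>The kernel of the action on \<open>\<Delta>\<close>\<close>

lemma cyc3_pair_in_Delta:
  assumes r: "a \<in> {1..n}" "b \<in> {1..n}" "c \<in> {1..n}" and d: "a \<noteq> b" "b \<noteq> c" "a \<noteq> c"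
  shows "{cyc3 a b c, cyc3 a c b} \<in> Delta n"
proof -
  have mem: "{cyc3 i j k, cyc3 i k j} \<in> Delta n" if "1 \<le> i" "i < j" "j < k" "k \<le> n" for i j k
    using that unfolding Delta_def Delta_ijk_def by blast
  have rot: "cyc3 b c a = cyc3 a b c" "cyc3 b a c = cyc3 a c b" "cyc3 c a b = cyc3 a b c"
    "cyc3 c b a = cyc3 a c b"
    using d by (auto simp: fun_eq_iff cyc3_def)
  consider "a < b" "b < c" | "a < c" "c < b" | "b < a" "a < c" | "b < c" "c < a" | "c < a" "a < b"
    | "c < b" "b < a"
    using d by arith
  then show ?thesis
  proof cases
    case 1 then show ?thesis using mem[of a b c] r by auto
  next
    case 2 then show ?thesis using mem[of a c b] r by (auto simp: insert_commute)
  next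
    case 3 then show ?thesis using mem[of b a c] r by (simp add: rot insert_commute)
  next
    case 4 then show ?thesis using mem[of b c a] r by (simp add: rot insert_commute)
  next
    case 5 then show ?thesis using mem[of c a b] r by (simp add: rot insert_commute)
  next
    case 6 then show ?thesis using mem[of c b a] r by (simp add: rot insert_commute)
  qed
qed

lemma delta_kernel_cay3_aut: "g \<in> delta_kernel n \<Longrightarrow> cay3_aut n g"
  unfolding delta_kernel_def stab_e_def using cag_aut_imp_cay3_aut by blast

lemma delta_kernel_id: "g \<in> delta_kernel n \<Longrightarrow> g id = id"
  unfolding delta_kernel_def stab_e_def by blast

lemma delta_kernel_extensional: "g \<in> delta_kernel n \<Longrightarrow> g \<in> extensional (alt_grp n)"
  unfolding delta_kernel_def stab_e_def cag_aut_def PiE_def by blast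

lemma delta_kernel_cyc3:
  assumes g: "g \<in> delta_kernel n"
    and r: "a \<in> {1..n}" "b \<in> {1..n}" "c \<in> {1..n}" and d: "a \<noteq> b" "b \<noteq> c" "a \<noteq> c"
  shows "g (cyc3 a b c) = cyc3 a b c \<or> g (cyc3 a b c) = cyc3 a c b"
proof -
  have "\<forall>D\<in>Delta n. g ` D = D" using g unfolding delta_kernel_def by blast
  from bspec[OF this cyc3_pair_in_Delta[OF r d]]
  have "g ` {cyc3 a b c, cyc3 a c b} = {cyc3 a b c, cyc3 a c b}" .
  moreover have "g (cyc3 a b c) \<in> g ` {cyc3 a b c, cyc3 a c b}" by simp
  ultimately show ?thesis by simp
qed

lemma cay3_adj_cyc3_common_pair:
  "a \<noteq> b \<Longrightarrow> a \<noteq> c \<Longrightarrow> a \<noteq> d \<Longrightarrow> b \<noteq> c \<Longrightarrow> b \<noteq> d \<Longrightarrow> c \<noteq> d \<Longrightarrow> cay3_adj (cyc3 a b c) (cyc3 a b d)"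
  by (rule cay3_adj_by_cyc3[of a c d]) (auto simp: fun_eq_iff cyc3_def)

lemma not_cay3_adj_cyc3_reversed_pair:
  assumes d: "a \<noteq> b" "a \<noteq> c" "a \<noteq> d" "b \<noteq> c" "b \<noteq> d" "c \<noteq> d"
  shows "\<not> cay3_adj (cyc3 a b c) (cyc3 a d b)"
proof
  assume "cay3_adj (cyc3 a b c) (cyc3 a d b)"
  then obtain u where u: "is_3cycle u" "cyc3 a d b = u \<circ> cyc3 a b c" unfolding cay3_adj_def by blast
  text \<open>\<open>u\<close> would have to swap \<open>a\<close> and \<open>c\<close>.\<close>
  have "u a = c" using fun_cong[OF u(2), of c] d by (simp add: cyc3_def)
  moreover have "u c = a" using fun_cong[OF u(2), of b] d by (simp add: cyc3_def)
  ultimately show False using is_3cycle_no_transposition[OF u(1)] d by blast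
qed

lemma delta_kernel_cyc3_swap:
  assumes g: "g \<in> delta_kernel n" and r: "{a, b, c} \<subseteq> {1..n}" and d: "distinct [a, b, c]"
  shows "g (cyc3 a b c) = cyc3 a b c \<longleftrightarrow> g (cyc3 a c b) = cyc3 a c b"
proof -
  have ne: "cyc3 a b c \<noteq> cyc3 a c b" using d cyc3_neq_inverse by simp
  have "cyc3 a b c \<in> alt_grp n" "cyc3 a c b \<in> alt_grp n"
    using r d by (auto intro: cyc3_in_alt_grp)
  with ne have "g (cyc3 a b c) \<noteq> g (cyc3 a c b)"
    using delta_kernel_cay3_aut[OF g] unfolding cay3_aut_def inj_on_def by blast
  moreover have "g (cyc3 a b c) = cyc3 a b c \<or> g (cyc3 a b c) = cyc3 a c b"
    "g (cyc3 a c b) = cyc3 a c b \<or> g (cyc3 a c b) = cyc3 a b c"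
    using delta_kernel_cyc3[OF g] r d by auto
  ultimately show ?thesis using ne by (elim disjE) simp_all
qed

text \<open>Adjacency of \<open>(a b c)\<close> and \<open>(a b d)\<close> is preserved, but \<open>(a b c)\<close> is not adjacent to
  \<open>(a d b)\<close>, nor \<open>(a b d)\<close> to \<open>(a c b)\<close>.\<close>
lemma delta_kernel_cyc3_replace:
  assumes g: "g \<in> delta_kernel n" and r: "{a, b, c, d} \<subseteq> {1..n}"
    and d: "distinct [a, b, c]" "distinct [a, b, d]"
  shows "g (cyc3 a b c) = cyc3 a b c \<longleftrightarrow> g (cyc3 a b d) = cyc3 a b d"
proof (cases "d = c")
  case False
  have inverted: "g (cyc3 a b x) = cyc3 a x b" if "x \<in> {c, d}" "g (cyc3 a b x) \<noteq> cyc3 a b x" for x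
    using delta_kernel_cyc3[OF g, of a b x] that r d by auto
  have "cyc3 a b c \<in> alt_grp n" "cyc3 a b d \<in> alt_grp n" "cay3_adj (cyc3 a b c) (cyc3 a b d)"
    using r d False by (auto intro: cyc3_in_alt_grp cay3_adj_cyc3_common_pair)
  then have adj: "cay3_adj (g (cyc3 a b c)) (g (cyc3 a b d))"
    by (rule cay3_aut_adj[OF delta_kernel_cay3_aut[OF g]])
  have no: "\<not> cay3_adj (cyc3 a b c) (cyc3 a d b)" "\<not> cay3_adj (cyc3 a b d) (cyc3 a c b)"
    using not_cay3_adj_cyc3_reversed_pair[of a b c d] not_cay3_adj_cyc3_reversed_pair[of a b d c]
      d False by auto
  show ?thesis
  proof
    assume fc: "g (cyc3 a b c) = cyc3 a b c"
    show "g (cyc3 a b d) = cyc3 a b d"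
    proof (rule ccontr)
      assume "g (cyc3 a b d) \<noteq> cyc3 a b d"
      with adj fc have "cay3_adj (cyc3 a b c) (cyc3 a d b)" using inverted[of d] by simp
      with no(1) show False ..
    qed
  next
    assume fd: "g (cyc3 a b d) = cyc3 a b d"
    show "g (cyc3 a b c) = cyc3 a b c"
    proof (rule ccontr)
      assume "g (cyc3 a b c) \<noteq> cyc3 a b c"
      with adj fd have "cay3_adj (cyc3 a c b) (cyc3 a b d)" using inverted[of c] by simp
      with no(2) show False using cay3_adj_sym by blast
    qed
  qed
qed simp

text \<open>The triple is moved into \<open>{1, 2, 3}\<close> one point at a time.\<close>
lemma triple_predicate_constant:
  fixes F :: "nat \<Rightarrow> nat \<Rightarrow> nat \<Rightarrow> bool"
  assumes n: "3 \<le> n"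
    and rotate: "\<And>a b c. {a, b, c} \<subseteq> {1..n} \<Longrightarrow> distinct [a, b, c] \<Longrightarrow> F a b c \<longleftrightarrow> F b c a"
    and swap: "\<And>a b c. {a, b, c} \<subseteq> {1..n} \<Longrightarrow> distinct [a, b, c] \<Longrightarrow> F a b c \<longleftrightarrow> F a c b"
    and replace: "\<And>a b c d. {a, b, c, d} \<subseteq> {1..n} \<Longrightarrow> distinct [a, b, c] \<Longrightarrow> distinct [a, b, d] \<Longrightarrow>
      F a b c \<longleftrightarrow> F a b d"
    and abc: "{a, b, c} \<subseteq> {1..n}" "distinct [a, b, c]"
  shows "F a b c \<longleftrightarrow> F 1 2 3"
proof -
  have small: "{1, 2, 3} \<subseteq> {1..n}" using n by auto
  have shift: "F a b c \<longleftrightarrow> F x a b"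
    if "{a, b, c} \<subseteq> {1..n}" "distinct [a, b, c]" "x \<in> {1, 2, 3}" "x \<noteq> a" "x \<noteq> b" for a b c x
  proof -
    have "{a, b, x} \<subseteq> {1..n}" "distinct [a, b, x]" "{b, x, a} \<subseteq> {1..n}" "distinct [b, x, a]"
      using that small by auto
    then show ?thesis using replace[of a b c x] rotate that small by auto
  qed
  have avoid: "\<exists>x\<in>{1, 2, 3::nat}. x \<noteq> u \<and> x \<noteq> v" for u v
    by (rule ccontr) auto
  obtain x where x: "x \<in> {1, 2, 3}" "x \<noteq> a" "x \<noteq> b" using avoid by blast
  obtain y where y: "y \<in> {1, 2, 3}" "y \<noteq> x" "y \<noteq> a" using avoid by blast
  obtain z where z: "z \<in> {1, 2, 3}" "z \<noteq> y" "z \<noteq> x" using avoid by blast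
  have "F a b c \<longleftrightarrow> F z y x"
    using shift[OF abc x] shift[of x a b y] shift[of y x a z] abc x y z small by auto
  moreover have "F z y x \<longleftrightarrow> F 1 2 3"
  proof -
    have "F 2 3 1 \<longleftrightarrow> F 1 2 3" "F 3 1 2 \<longleftrightarrow> F 1 2 3" "F 1 3 2 \<longleftrightarrow> F 1 2 3"
      "F 3 2 1 \<longleftrightarrow> F 1 2 3" "F 2 1 3 \<longleftrightarrow> F 1 2 3"
      using rotate[of 1 2 3] rotate[of 2 3 1] swap[of 1 2 3] rotate[of 1 3 2] rotate[of 3 2 1] small
      by auto
    moreover have "(z, y, x) \<in> {(1, 2, 3), (2, 3, 1), (3, 1, 2), (1, 3, 2), (3, 2, 1), (2, 1, 3)}"
      using x y z by auto
    ultimately show ?thesis by auto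
  qed
  ultimately show ?thesis by blast
qed

lemma delta_kernel_uniform:
  assumes g: "g \<in> delta_kernel n" and n: "3 \<le> n"
  shows "(\<forall>t\<in>three_cycles n. g t = t) \<or> (\<forall>t\<in>three_cycles n. g t = inv t)"
proof -
  define F where "F a b c \<longleftrightarrow> g (cyc3 a b c) = cyc3 a b c" for a b c
  have same: "F a b c \<longleftrightarrow> F 1 2 3" if "{a, b, c} \<subseteq> {1..n}" "distinct [a, b, c]" for a b c
  proof (rule triple_predicate_constant[OF n _ _ _ that])
    show "F a b c \<longleftrightarrow> F b c a" if "distinct [a, b, c]" for a b c
      using cyc3_rotate[of a b c] that unfolding F_def by simp
    show "F a b c \<longleftrightarrow> F a c b" if "{a, b, c} \<subseteq> {1..n}" "distinct [a, b, c]" for a b c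
      using delta_kernel_cyc3_swap[OF g that] unfolding F_def .
    show "F a b c \<longleftrightarrow> F a b d"
      if "{a, b, c, d} \<subseteq> {1..n}" "distinct [a, b, c]" "distinct [a, b, d]" for a b c d
      using delta_kernel_cyc3_replace[OF g that] unfolding F_def .
  qed
  have "g t = t \<longleftrightarrow> F 1 2 3" "\<not> F 1 2 3 \<Longrightarrow> g t = inv t" if t3: "t \<in> three_cycles n" for t
  proof -
    obtain a b c where r: "{a, b, c} \<subseteq> {1..n}" and d: "distinct [a, b, c]" and t: "t = cyc3 a b c"
      using t3 unfolding three_cycles_def by auto
    show "g t = t \<longleftrightarrow> F 1 2 3" using same[OF r d] t unfolding F_def by simp
    show "\<not> F 1 2 3 \<Longrightarrow> g t = inv t"
      using same[OF r d] delta_kernel_cyc3[OF g, of a b c] inv_cyc3[of a b c] r d t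
      unfolding F_def by auto
  qed
  then show ?thesis by blast
qed

lemma delta_kernel_subset:
  assumes n: "5 \<le> n"
  shows "delta_kernel n \<subseteq> {restrict id (alt_grp n), restrict inv (alt_grp n)}"
proof
  fix g assume g: "g \<in> delta_kernel n"
  have g_ext: "g \<in> extensional (alt_grp n)" using delta_kernel_extensional[OF g] .
  have "3 \<le> n" using n by simp
  from delta_kernel_uniform[OF g this]
  consider "\<forall>t\<in>three_cycles n. g t = t" | "\<forall>t\<in>three_cycles n. g t = inv t" by blast
  then show "g \<in> {restrict id (alt_grp n), restrict inv (alt_grp n)}"
  proof cases
    case 1
    then have "fixes_closed_nbhd n g" using delta_kernel_id[OF g] unfolding fixes_closed_nbhd_def by blast
    then have "g x = x" if "x \<in> alt_grp n" for x
      using cay3_aut_fixing_closed_nbhd_is_id[OF delta_kernel_cay3_aut[OF g] _ n that] by blast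
    then have "g = restrict id (alt_grp n)" using g_ext by (intro ext) (simp add: extensional_def)
    then show ?thesis by blast
  next
    case 2
    have aut: "cay3_aut n (g \<circ> inv)"
      using cay3_aut_comp[OF delta_kernel_cay3_aut[OF g] cay3_aut_inv] .
    have "fixes_closed_nbhd n (g \<circ> inv)"
      unfolding fixes_closed_nbhd_def
    proof
      show "(g \<circ> inv) id = id" using delta_kernel_id[OF g] by (simp add: inv_id)
      show "\<forall>t\<in>three_cycles n. (g \<circ> inv) t = t"
      proof
        fix t assume t: "t \<in> three_cycles n"
        then have "inv t \<in> three_cycles n" using three_cycles_iff is_3cycle_inv alt_grp_inv by blast
        moreover have "inv (inv t) = t" using t alt_grp_inv_inv three_cycles_iff by blast
        ultimately show "(g \<circ> inv) t = t" using 2 by simp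
      qed
    qed
    note fixed = cay3_aut_fixing_closed_nbhd_is_id[OF aut this n]
    have "g x = inv x" if "x \<in> alt_grp n" for x
      using fixed[OF alt_grp_inv[OF that]] alt_grp_inv_inv[OF that] by simp
    then have "g = restrict inv (alt_grp n)" using g_ext by (intro ext) (simp add: extensional_def)
    then show ?thesis by blast
  qed
qed

theorem lemma3p6:
  fixes n :: nat
  assumes "n \<ge> 5"
  shows "finite (delta_kernel n) \<and> card (delta_kernel n) \<le> 2"
proof -
  let ?K = "{restrict id (alt_grp n), restrict inv (alt_grp n)}"
  have sub: "delta_kernel n \<subseteq> ?K" using delta_kernel_subset[OF assms] .
  have "card (delta_kernel n) \<le> card ?K" using card_mono[OF _ sub] by simp
  also have "\<dots> \<le> 2" by (simp add: card_insert_if)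
  finally show ?thesis using finite_subset[OF sub] by simp
qed

end
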